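(* In the construction below, let $k\in\{0,\dots,K-1\}$ and let $S\subseteq X$ be a nonempty set with $\mathrm{diam}_X(S)\le 2\tau^{-k}$. If $u'\in S\cap U_{k+1}$, then $(\mathsf f_k(S),u')\in A_k$.
   Context: Construction. Let $(X,d)$ be a metric space with $n=|X|\ge2$ and $\mathrm{diam}(X)=1$. For $S\subseteq X$, $r\ge0$: $B_X(S,r):=\{x\in X:\exists s\in S,\ d(x,s)\le r\}$ and $B_X(x,r):=B_X(\{x\},r)$. Let $\varepsilon_0:=\min\{d(x,y):x\ne y\}$, $\tau:=12$, $K:=1+\lceil\log_\tau(1/\varepsilon_0)\rceil$. For $\eta>0$ the greedy $\eta$-net is built as: $N_0=\emptyset$; for $j\ge1$, $S_j:=X\setminus B_X(N_{j-1},\eta)$; if $S_j=\emptyset$ output $N_{j-1}$; else pick $x_j\in S_j$ maximizing $|B_X(x,\eta/3)|$ and set $N_j=N_{j-1}\cup\{x_j\}$. For $k=0,\dots,K$ let $U_k$ be the greedy $\tau^{-k}$-net. For $k<K$, $A_k$ is the set of pairs $(u,u')\in U_k\times U_{k+1}$ with (i) $d(u,u')\le4\tau^{-k}$ and (ii) $|B_X(u,\tau^{-k}/3)|\ge\max\{|B_X(w,\tau^{-k}/3)|:w\in B_X(u',6\tau^{-(k+1)})\}$. For $S\subseteq X$ nonempty, $\mathsf f_k(S)$ denotes a (fixed) maximizer of $|B_X(y,\tau^{-k}/3)|$ over $y\in B_X(S,2\tau^{-k})\cap U_k$. *)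

theory Defs
  imports "HOL-Analysis.Analysis"
begin

definition nbhd :: "'a set \<Rightarrow> ('a \<Rightarrow> 'a \<Rightarrow> real) \<Rightarrow> 'a set \<Rightarrow> real \<Rightarrow> 'a set" where
  "nbhd X d S r = {x \<in> X. \<exists>s\<in>S. d x s \<le> r}"

definition pball :: "'a set \<Rightarrow> ('a \<Rightarrow> 'a \<Rightarrow> real) \<Rightarrow> 'a \<Rightarrow> real \<Rightarrow> 'a set" where
  "pball X d x r = nbhd X d {x} r"

definition sdiam :: "('a \<Rightarrow> 'a \<Rightarrow> real) \<Rightarrow> 'a set \<Rightarrow> real" where
  "sdiam d S = (SUP p\<in>S \<times> S. d (fst p) (snd p))"

definition eps0 :: "'a set \<Rightarrow> ('a \<Rightarrow> 'a \<Rightarrow> real) \<Rightarrow> real" where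
  "eps0 X d = Min {d x y | x y. x \<in> X \<and> y \<in> X \<and> x \<noteq> y}"

definition tau :: real where "tau = 12"

definition Klev :: "'a set \<Rightarrow> ('a \<Rightarrow> 'a \<Rightarrow> real) \<Rightarrow> nat" where
  "Klev X d = 1 + nat \<lceil>log tau (1 / eps0 X d)\<rceil>"

text \<open>A run of the greedy \<eta>-net procedure: the list xs = [x_1,...,x_m] of picked points,
  where x_{i+1} lies in S_{i+1} = X - B(N_i, \<eta>) and maximizes |B(x,\<eta>/3)| over S_{i+1},
  and the procedure stops because S_{m+1} is empty. Any tie-breaking is allowed.\<close>
definition greedy_run :: "'a set \<Rightarrow> ('a \<Rightarrow> 'a \<Rightarrow> real) \<Rightarrow> real \<Rightarrow> 'a list \<Rightarrow> bool" where
  "greedy_run X d \<eta> xs \<longleftrightarrow>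
     (\<forall>i < length xs.
        xs ! i \<in> X - nbhd X d (set (take i xs)) \<eta> \<and>
        (\<forall>y \<in> X - nbhd X d (set (take i xs)) \<eta>.
            card (pball X d y (\<eta>/3)) \<le> card (pball X d (xs ! i) (\<eta>/3)))) \<and>
     X - nbhd X d (set xs) \<eta> = {}"

definition greedy_net :: "'a set \<Rightarrow> ('a \<Rightarrow> 'a \<Rightarrow> real) \<Rightarrow> real \<Rightarrow> 'a set \<Rightarrow> bool" where
  "greedy_net X d \<eta> N \<longleftrightarrow> (\<exists>xs. greedy_run X d \<eta> xs \<and> N = set xs)"

definition Aedge :: "'a set \<Rightarrow> ('a \<Rightarrow> 'a \<Rightarrow> real) \<Rightarrow> (nat \<Rightarrow> 'a set) \<Rightarrow> nat \<Rightarrow> ('a \<times> 'a) set" where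
  "Aedge X d U k = {(u, u'). u \<in> U k \<and> u' \<in> U (Suc k) \<and>
      d u u' \<le> 4 * tau powi (- int k) \<and>
      card (pball X d u (tau powi (- int k) / 3)) \<ge>
        Max ((\<lambda>w. card (pball X d w (tau powi (- int k) / 3)))
               ` pball X d u' (6 * tau powi (- int (Suc k))))}"

text \<open>y is an admissible value of f_k(S): a maximizer of |B(y,\<tau>^-k/3)| over B(S,2\<tau>^-k) \<inter> U_k.\<close>
definition is_fk :: "'a set \<Rightarrow> ('a \<Rightarrow> 'a \<Rightarrow> real) \<Rightarrow> (nat \<Rightarrow> 'a set) \<Rightarrow> nat \<Rightarrow> 'a set \<Rightarrow> 'a \<Rightarrow> bool" where
  "is_fk X d U k S y \<longleftrightarrow>
     y \<in> nbhd X d S (2 * tau powi (- int k)) \<inter> U k \<and>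
     (\<forall>z \<in> nbhd X d S (2 * tau powi (- int k)) \<inter> U k.
        card (pball X d z (tau powi (- int k) / 3)) \<le> card (pball X d y (tau powi (- int k) / 3)))"

end

theory Submission
  imports Defs
begin

text \<open>Call a point heavy if its ball of radius \<open>\<tau>\<^sup>-\<^sup>k/3\<close> has many points. The net point that
  first covers a point w is at least as heavy as w, because at that step w was still a candidate
  of the greedy choice. Every point within \<open>\<tau>\<^sup>-\<^sup>k\<close> of S is thus dominated by a net point in
  \<open>B(S, 2\<tau>\<^sup>-\<^sup>k)\<close>, hence by \<open>f\<^sub>k(S)\<close>; the distance bound of an edge is the triangle
  inequality through S.\<close>

lemma exists_switch_below:
  assumes "\<not> P 0" "P n"
  shows "\<exists>i<n. \<not> P i \<and> P (Suc i)"
  using assms by (induction n) (auto simp: less_Suc_eq)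

lemma greedy_run_dominating_point:
  assumes run: "greedy_run X d \<eta> xs" and w: "w \<in> X"
  shows "\<exists>x\<in>set xs. d w x \<le> \<eta> \<and> card (pball X d w (\<eta>/3)) \<le> card (pball X d x (\<eta>/3))"
proof -
  define covered where "covered n \<longleftrightarrow> w \<in> nbhd X d (set (take n xs)) \<eta>" for n
  have "covered (length xs)" using run w unfolding greedy_run_def covered_def by auto
  moreover have "\<not> covered 0" unfolding covered_def nbhd_def by simp
  ultimately obtain i where i: "i < length xs" "\<not> covered i" "covered (Suc i)"
    using exists_switch_below[of covered "length xs"] by blast
  have "take (Suc i) xs = take i xs @ [xs ! i]"
    using i(1) by (simp add: take_Suc_conv_app_nth)
  then have "d w (xs ! i) \<le> \<eta>" using i(2,3) unfolding covered_def nbhd_def by auto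
  moreover have "w \<in> X - nbhd X d (set (take i xs)) \<eta>" using i(2) w unfolding covered_def by auto
  then have "card (pball X d w (\<eta>/3)) \<le> card (pball X d (xs ! i) (\<eta>/3))"
    using run i(1) unfolding greedy_run_def by blast
  ultimately show ?thesis using i(1) by auto
qed

lemma greedy_net_dominating_point:
  assumes "greedy_net X d \<eta> N" "w \<in> X"
  shows "\<exists>x\<in>N. d w x \<le> \<eta> \<and> card (pball X d w (\<eta>/3)) \<le> card (pball X d x (\<eta>/3))"
proof -
  obtain xs where "greedy_run X d \<eta> xs" "N = set xs" using assms(1) unfolding greedy_net_def by blast
  then show ?thesis using greedy_run_dominating_point[OF _ assms(2)] by simp
qed

lemma greedy_net_subset:
  assumes "greedy_net X d \<eta> N"
  shows "N \<subseteq> X"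
  using assms unfolding greedy_net_def greedy_run_def by (auto simp: in_set_conv_nth)

lemma dist_le_sdiam:
  assumes "finite S" "a \<in> S" "b \<in> S"
  shows "d a b \<le> sdiam d S"
  unfolding sdiam_def using assms
  by (intro cSUP_upper2[where x="(a, b)"]) (auto intro: bdd_above_finite)

lemma tau_powi_Suc: "6 * tau powi (- int (Suc k)) = tau powi (- int k) / 2"
  unfolding tau_def by (simp add: power_int_diff power_int_minus field_simps)

lemma finite_pball: "finite X \<Longrightarrow> finite (pball X d x r)"
  unfolding pball_def nbhd_def by auto

lemma is_fk_dist:
  assumes "Metric_space X d" "finite X" "S \<subseteq> X" "sdiam d S \<le> 2 * tau powi (- int k)"
    and "u \<in> S" "is_fk X d U k S y"
  shows "d y u \<le> 4 * tau powi (- int k)"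
proof -
  interpret Metric_space X d by fact
  obtain s where s: "s \<in> S" "y \<in> X" "d y s \<le> 2 * tau powi (- int k)"
    using assms(6) unfolding is_fk_def nbhd_def by auto
  have "finite S" using assms(2,3) finite_subset by blast
  then have "d s u \<le> 2 * tau powi (- int k)"
    using dist_le_sdiam[of S s u d] assms(4,5) s(1) by linarith
  moreover have "s \<in> X" "u \<in> X" using s(1) assms(3,5) by auto
  ultimately show ?thesis using triangle[of y s u] s(2,3) by linarith
qed

lemma is_fk_dominates:
  assumes "Metric_space X d" "greedy_net X d r (U k)" "r = tau powi (- int k)"
    and "u \<in> S" "S \<subseteq> X" "is_fk X d U k S y"
    and "w \<in> X" "d w u \<le> r"
  shows "card (pball X d w (r/3)) \<le> card (pball X d y (r/3))"
proof -
  interpret Metric_space X d by fact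
  obtain x where x: "x \<in> U k" "d w x \<le> r" "card (pball X d w (r/3)) \<le> card (pball X d x (r/3))"
    using greedy_net_dominating_point[OF assms(2,7)] by blast
  have xX: "x \<in> X" using x(1) greedy_net_subset[OF assms(2)] by blast
  have "d x u \<le> d x w + d w u" using triangle[OF xX assms(7)] assms(4,5) by blast
  also have "\<dots> \<le> 2 * r" using x(2) assms(8) commute[of w x] by linarith
  finally have "x \<in> nbhd X d S (2 * r) \<inter> U k" using xX x(1) assms(4) unfolding nbhd_def by auto
  then have "card (pball X d x (r/3)) \<le> card (pball X d y (r/3))"
    using assms(3,6) unfolding is_fk_def by blast
  with x(3) show ?thesis by linarith
qed

theorem lemma3p3:
  fixes X :: "'a set" and d :: "'a \<Rightarrow> 'a \<Rightarrow> real" and U :: "nat \<Rightarrow> 'a set"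
    and k :: nat and S :: "'a set" and u' y :: 'a
  assumes "Metric_space X d"
    and "finite X" and "card X \<ge> 2"
    and "sdiam d X = 1"
    and "\<And>j. j \<le> Klev X d \<Longrightarrow> greedy_net X d (tau powi (- int j)) (U j)"
    and "k < Klev X d"
    and "S \<subseteq> X" and "S \<noteq> {}"
    and "sdiam d S \<le> 2 * tau powi (- int k)"
    and "u' \<in> S \<inter> U (Suc k)"
    and "is_fk X d U k S y"
  shows "(y, u') \<in> Aedge X d U k"
proof -
  define r where "r = tau powi (- int k)"
  have "r > 0" unfolding r_def tau_def by simp
  have net: "greedy_net X d r (U k)" using assms(5,6) unfolding r_def by simp
  have u': "u' \<in> S" "u' \<in> X" "u' \<in> U (Suc k)" using assms(7,10) by auto
  have "card (pball X d w (r/3)) \<le> card (pball X d y (r/3))" if "w \<in> pball X d u' (r/2)" for w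
  proof -
    have "w \<in> X" "d w u' \<le> r" using that \<open>r > 0\<close> unfolding pball_def nbhd_def by auto
    then show ?thesis using is_fk_dominates[OF assms(1) net r_def u'(1) assms(7,11)] by blast
  qed
  moreover have "u' \<in> pball X d u' (r/2)"
    using u'(2) \<open>r > 0\<close> Metric_space.zero[OF assms(1), of u' u'] unfolding pball_def nbhd_def by auto
  ultimately have "Max ((\<lambda>w. card (pball X d w (r/3))) ` pball X d u' (r/2))
                    \<le> card (pball X d y (r/3))"
    using finite_pball[OF assms(2)] by (subst Max_le_iff) auto
  moreover have "y \<in> U k" using assms(11) unfolding is_fk_def by blast
  moreover have "d y u' \<le> 4 * r"
    using is_fk_dist[OF assms(1,2,7,9) u'(1) assms(11)] unfolding r_def .
  ultimately show ?thesis
    using u'(3) unfolding Aedge_def tau_powi_Suc r_def by (simp only: mem_Collect_eq prod.case)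
qed

end
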